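(* Let $n\geq1$ and let $e\in\mathbf{I}_n(\mathcal{AW})$ have parameters $(p,q)$. Then there are exactly $p+q$ sequences in $\mathbf{I}_{n+1}(\mathcal{AW})$ whose first $n$ entries form $e$; these are $(e_1,\ldots,e_n,b)$ with $0\leq b\leq\max\{e_{n-1},e_n\}+1$, and, as $b$ runs from $0$ to $\max\{e_{n-1},e_n\}+1$, their parameters are respectively $$(1,p),(2,p-1),\ldots,(p,1),\ (p+1,1),(p+2,1),\ldots,(p+q,1).$$
   Context: $\mathbf{I}_n$ is the set of inversion sequences $e=(e_1,\ldots,e_n)$ with $0\leq e_i<i$. $\mathbf{I}_n(\mathcal{AW})$ is the set of $e\in\mathbf{I}_n$ such that $e_i\leq\max\{e_{i-2},e_{i-1}\}+1$ for every $2<i\leq n$. The parameters of $e\in\mathbf{I}_n(\mathcal{AW})$ are $(p,q)$ with $p=e_n+1$ and $q=\max\{e_{n-1},e_n\}+1-e_n$, using the convention $e_0=0$ (so the sequence $(0)$ of length $1$ has parameters $(1,1)$). *)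

theory Defs
  imports Main
begin

text \<open>Sequences are lists of naturals; the paper's entry e_i (1-indexed) is e ! (i-1).\<close>

definition ent :: "nat list \<Rightarrow> nat \<Rightarrow> nat" where
  "ent e i = (if i = 0 then 0 else e ! (i - 1))"

definition inv_seqs :: "nat \<Rightarrow> nat list set" where
  "inv_seqs n = {e. length e = n \<and> (\<forall>i\<in>{1..n}. ent e i < i)}"

definition AW_seqs :: "nat \<Rightarrow> nat list set" where
  "AW_seqs n = {e \<in> inv_seqs n.
     \<forall>i. 2 < i \<and> i \<le> n \<longrightarrow> ent e i \<le> max (ent e (i - 2)) (ent e (i - 1)) + 1}"

definition params :: "nat list \<Rightarrow> nat \<times> nat" where
  "params e = (let n = length e in
     (ent e n + 1, max (ent e (n - 1)) (ent e n) + 1 - ent e n))"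

end

theory Submission
  imports Defs
begin

text \<open>Appending b to e only adds the constraints at position n + 1: the inversion bound
  b \<le> n and (for n \<ge> 2) the AW bound b \<le> max e(n-1) e(n) + 1. Since e is itself an inversion sequence the second
  bound implies the first, so the extensions are exactly those with b \<le> max e(n-1) e(n) + 1, and the
  parameters (b + 1, max e(n) b + 1 - b) of e @ [b] are read off directly.\<close>

lemma ent_snoc_le: "i \<le> length e \<Longrightarrow> ent (e @ [b]) i = ent e i"
  by (auto simp: ent_def nth_append)

lemma ent_snoc_last: "ent (e @ [b]) (Suc (length e)) = b"
  by (simp add: ent_def)

lemma length_AW_seqs: "e \<in> AW_seqs n \<Longrightarrow> length e = n"
  by (simp add: AW_seqs_def inv_seqs_def)

lemma ent_AW_seqs_less: "e \<in> AW_seqs n \<Longrightarrow> 1 \<le> i \<Longrightarrow> i \<le> n \<Longrightarrow> ent e i < i"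
  by (auto simp: AW_seqs_def inv_seqs_def)

lemma inv_seqs_snoc_iff:
  assumes "length e = n"
  shows "e @ [b] \<in> inv_seqs (Suc n) \<longleftrightarrow> e \<in> inv_seqs n \<and> b < Suc n"
proof -
  have "(\<forall>i\<in>{1..Suc n}. P i) \<longleftrightarrow> (\<forall>i\<in>{1..n}. P i) \<and> P (Suc n)" for P
    by (auto simp: atLeastAtMostSuc_conv)
  then show ?thesis
    using assms by (simp add: inv_seqs_def ent_snoc_le ent_snoc_last [of e b, simplified assms])
qed

lemma AW_seqs_snoc_iff:
  assumes "length e = n"
  shows "e @ [b] \<in> AW_seqs (Suc n) \<longleftrightarrow>
    e \<in> AW_seqs n \<and> b < Suc n \<and> (2 \<le> n \<longrightarrow> b \<le> max (ent e (n - 1)) (ent e n) + 1)"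
proof -
  let ?f = "e @ [b]"
  let ?AW = "\<lambda>f i. ent f i \<le> max (ent f (i - 2)) (ent f (i - 1)) + 1"
  have "(\<forall>i. 2 < i \<and> i \<le> Suc n \<longrightarrow> P i)
        \<longleftrightarrow> (\<forall>i. 2 < i \<and> i \<le> n \<longrightarrow> P i) \<and> (2 \<le> n \<longrightarrow> P (Suc n))" for P
    by (auto simp: le_Suc_eq)
  moreover have "?AW ?f i \<longleftrightarrow> ?AW e i" if "i \<le> n" for i
    using that assms by (simp add: ent_snoc_le)
  moreover have "?AW ?f (Suc n) \<longleftrightarrow> b \<le> max (ent e (n - 1)) (ent e n) + 1"
    using assms by (simp add: ent_snoc_le ent_snoc_last [of e b, simplified assms])
  ultimately show ?thesis
    using assms by (auto simp: AW_seqs_def inv_seqs_snoc_iff)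
qed

lemma max_last_two_AW_seqs_less:
  assumes "e \<in> AW_seqs n" and "1 \<le> n"
  shows "max (ent e (n - 1)) (ent e n) < n"
proof -
  have "ent e (n - 1) < n"
  proof (cases "n = 1")
    case True
    then show ?thesis by (simp add: ent_def)
  next
    case False
    then have "ent e (n - 1) < n - 1"
      using assms ent_AW_seqs_less [of e n "n - 1"] by simp
    then show ?thesis
      by simp
  qed
  then show ?thesis
    using assms ent_AW_seqs_less [of e n n] by simp
qed

lemma AW_seqs_snoc_iff_le:
  assumes "e \<in> AW_seqs n" and "1 \<le> n"
  shows "e @ [b] \<in> AW_seqs (Suc n) \<longleftrightarrow> b \<le> max (ent e (n - 1)) (ent e n) + 1"
proof -
  have "max (ent e (n - 1)) (ent e n) < n"
    using assms by (rule max_last_two_AW_seqs_less)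
  \<comment> \<open>for n = 1 the AW constraint is void and the inversion bound b < 2 takes its place\<close>
  then have "b < Suc n \<and> (2 \<le> n \<longrightarrow> b \<le> max (ent e (n - 1)) (ent e n) + 1)
      \<longleftrightarrow> b \<le> max (ent e (n - 1)) (ent e n) + 1"
    using assms(2) by (cases "n = 1") auto
  then show ?thesis
    using AW_seqs_snoc_iff [OF length_AW_seqs [OF assms(1)]] assms(1) by simp
qed

lemma AW_seqs_extensions:
  assumes "e \<in> AW_seqs n" and "1 \<le> n"
  shows "{f \<in> AW_seqs (Suc n). take n f = e}
    = (\<lambda>b. e @ [b]) ` {..max (ent e (n - 1)) (ent e n) + 1}"
proof (intro equalityI subsetI)
  fix f
  assume f: "f \<in> {f \<in> AW_seqs (Suc n). take n f = e}"
  then have "length f = Suc n"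
    using length_AW_seqs by blast
  then have "f = take n f @ [f ! n]"
    by (metis lessI order_refl take_Suc_conv_app_nth take_all)
  then have "f = e @ [f ! n]"
    using f by simp
  with f show "f \<in> (\<lambda>b. e @ [b]) ` {..max (ent e (n - 1)) (ent e n) + 1}"
    using AW_seqs_snoc_iff_le [OF assms, of "f ! n"] by force
next
  fix f
  assume "f \<in> (\<lambda>b. e @ [b]) ` {..max (ent e (n - 1)) (ent e n) + 1}"
  then show "f \<in> {f \<in> AW_seqs (Suc n). take n f = e}"
    using AW_seqs_snoc_iff_le [OF assms] length_AW_seqs [OF assms(1)] by auto
qed

lemma params_snoc: "params (e @ [b]) = (b + 1, max (ent e (length e)) b + 1 - b)"
  by (simp add: params_def Let_def ent_snoc_le ent_snoc_last)

theorem lemma5p1: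
  fixes n p q :: nat and e :: "nat list"
  assumes "n \<ge> 1" and "e \<in> AW_seqs n" and "params e = (p, q)"
  shows "card {f \<in> AW_seqs (Suc n). take n f = e} = p + q
    \<and> {f \<in> AW_seqs (Suc n). take n f = e}
        = {e @ [b] | b. b \<le> max (ent e (n - 1)) (ent e n) + 1}
    \<and> (\<forall>b \<le> max (ent e (n - 1)) (ent e n) + 1.
          params (e @ [b]) = (if b < p then (b + 1, p - b) else (b + 1, 1)))"
proof -
  define M where "M = max (ent e (n - 1)) (ent e n)"
  have len: "length e = n"
    using assms(2) by (rule length_AW_seqs)
  have pq: "p = ent e n + 1" "q = M + 1 - ent e n"
    using assms(3) len by (auto simp: params_def M_def Let_def)
  have ext: "{f \<in> AW_seqs (Suc n). take n f = e} = (\<lambda>b. e @ [b]) ` {..M + 1}"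
    unfolding M_def using assms(2,1) by (rule AW_seqs_extensions)
  have "card ((\<lambda>b. e @ [b]) ` {..M + 1}) = M + 2"
    by (simp add: card_image inj_on_def)
  moreover have "M + 2 = p + q"
    using pq M_def by simp
  moreover have "params (e @ [b]) = (if b < p then (b + 1, p - b) else (b + 1, 1))" for b
    using params_snoc [of e b] len pq by auto
  ultimately show ?thesis
    using ext by (auto simp: M_def)
qed

end
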